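(* Let $\mathrm{BS}$ be the Biggs-Smith graph and let $u$ be any vertex; write $D_j(u)=\{w:\operatorname{dist}(w,u)=j\}$. (1) For each $4\le i\le 6$ and each edge $(x,y)$ with $x,y\in D_i(u)$, the $(x,u)$-geodesic and the $(y,u)$-geodesic first meet at a vertex of $D_{i-4}(u)$. (2) Let $(x,y)$ be an edge with $x,y\in D_6(u)$. Then the 4-displaced paths from $x$ to $u$ and from $y$ to $u$ meet only at $u$.
   Context: The Biggs-Smith graph $\mathrm{BS}$ is the cubic graph on the $102$ vertices $ia,ib,ic,id,ie,if$ for $i\in\{1,\dots,17\}$ (indices taken modulo 17, with $0$ written as $17$), whose edges are: $ie\,ia$, $ie\,ib$, $ie\,if$, $if\,ic$, $if\,id$ for each $i$; and $ia\,(i+1)a$, $ib\,(i+4)b$, $ic\,(i+2)c$, $id\,(i+8)d$ for each $i$. In $\mathrm{BS}$, for every vertex $u$ and every $w$ with $1\le \operatorname{dist}(w,u)\le 6$ the $(w,u)$-geodesic (shortest path) is unique, and each $D_j(u)$ with $4\le j\le 6$ induces a perfect matching. For $x\in D_6(u)$, the 4-displaced path from $x$ to $u$ is the path that follows the $(x,u)$-geodesic down to its vertex in $D_4(u)$, then takes the unique edge inside $D_4(u)$ at that vertex to a vertex $z$, and then follows the $(z,u)$-geodesic to $u$. *)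

theory Defs
  imports Main
begin

text \<open>The Biggs-Smith graph. A vertex is a pair (i, t) with i < 17 (index taken mod 17,
  index 17 represented by 0) and a letter t.\<close>

datatype letter = La | Lb | Lc | Ld | Le | Lf

type_synonym bsvert = "nat \<times> letter"

definition bsV :: "bsvert set" where
  "bsV = {v. fst v < 17}"

definition bsE0 :: "bsvert \<Rightarrow> bsvert \<Rightarrow> bool" where
  "bsE0 v w \<longleftrightarrow> fst v < 17 \<and> fst w < 17 \<and>
     ((fst v = fst w \<and> (snd v, snd w) \<in> {(Le,La),(Le,Lb),(Le,Lf),(Lf,Lc),(Lf,Ld)})
    \<or> (snd v = La \<and> snd w = La \<and> fst w = (fst v + 1) mod 17)
    \<or> (snd v = Lb \<and> snd w = Lb \<and> fst w = (fst v + 4) mod 17)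
    \<or> (snd v = Lc \<and> snd w = Lc \<and> fst w = (fst v + 2) mod 17)
    \<or> (snd v = Ld \<and> snd w = Ld \<and> fst w = (fst v + 8) mod 17))"

definition bs_adj :: "bsvert \<Rightarrow> bsvert \<Rightarrow> bool" where
  "bs_adj v w \<longleftrightarrow> bsE0 v w \<or> bsE0 w v"

definition bs_walk :: "bsvert list \<Rightarrow> bsvert \<Rightarrow> bsvert \<Rightarrow> bool" where
  "bs_walk p x y \<longleftrightarrow> p \<noteq> [] \<and> hd p = x \<and> last p = y \<and> set p \<subseteq> bsV \<and>
     (\<forall>k. Suc k < length p \<longrightarrow> bs_adj (p ! k) (p ! Suc k))"

definition bs_dist :: "bsvert \<Rightarrow> bsvert \<Rightarrow> nat" where
  "bs_dist x y = (LEAST n. \<exists>p. bs_walk p x y \<and> length p = Suc n)"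

definition bsD :: "nat \<Rightarrow> bsvert \<Rightarrow> bsvert set" where
  "bsD j u = {w \<in> bsV. bs_dist w u = j}"

definition bs_geodesic :: "bsvert list \<Rightarrow> bsvert \<Rightarrow> bsvert \<Rightarrow> bool" where
  "bs_geodesic p x y \<longleftrightarrow> bs_walk p x y \<and> length p = Suc (bs_dist x y)"

definition first_meet :: "'a list \<Rightarrow> 'a list \<Rightarrow> 'a" where
  "first_meet p q = hd (filter (\<lambda>v. v \<in> set q) p)"

text \<open>4-displaced path from x \<in> D_6(u) to u: the geodesic p from x down to its vertex p!2 in
  D_4(u), then the edge to z \<in> D_4(u), then the geodesic r from z to u.\<close>
definition displaced4 :: "bsvert list \<Rightarrow> bsvert list \<Rightarrow> bsvert list" where
  "displaced4 p r = take 3 p @ r"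

end

theory Submission
  imports Defs
begin

text \<open>The rotations \<open>(i, t) \<mapsto> ((i + k) mod 17, t)\<close> are automorphisms of BS, and both
  properties are invariant under automorphisms, so it suffices to verify them at the six
  vertices \<open>(0, t)\<close>. At such a vertex \<open>u\<close> a precomputed table \<open>d\<close> is certified to be the
  distance to \<open>u\<close> in breadth-first-search style: \<open>d u = 0\<close>, \<open>d\<close> drops by at most one along
  an edge, and every other vertex has a neighbour one step closer. If in addition that
  neighbour is unique up to distance 6, every geodesic to \<open>u\<close> of length at most 6 is the
  path that keeps stepping to the closer neighbour. Both properties thereby become finite
  statements about these descent paths, which are decided by evaluation.\<close>


definition bs_nbrs :: "bsvert \<Rightarrow> bsvert list" where
  "bs_nbrs v = (case v of (i, t) \<Rightarrow> (case t of
      La \<Rightarrow> [((i + 1) mod 17, La), ((i + 16) mod 17, La), (i, Le)]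
    | Lb \<Rightarrow> [((i + 4) mod 17, Lb), ((i + 13) mod 17, Lb), (i, Le)]
    | Lc \<Rightarrow> [((i + 2) mod 17, Lc), ((i + 15) mod 17, Lc), (i, Lf)]
    | Ld \<Rightarrow> [((i + 8) mod 17, Ld), ((i + 9) mod 17, Ld), (i, Lf)]
    | Le \<Rightarrow> [(i, La), (i, Lb), (i, Lf)]
    | Lf \<Rightarrow> [(i, Le), (i, Lc), (i, Ld)]))"

definition bs_vertices :: "bsvert list" where
  "bs_vertices = [(i, t). t \<leftarrow> [La, Lb, Lc, Ld, Le, Lf], i \<leftarrow> [0..<17]]"

lemma set_bs_vertices: "set bs_vertices = bsV"
proof -
  have "(i, t) \<in> set bs_vertices \<longleftrightarrow> i < 17" for i t
    by (cases t) (auto simp: bs_vertices_def simp del: upt_rec_numeral)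
  then show ?thesis by (auto simp: bsV_def)
qed

lemma mod_add_complement:
  fixes i :: nat
  assumes "i < n" "a + b = n"
  shows "((i + a) mod n + b) mod n = i"
  using assms by (simp add: mod_add_left_eq add.assoc)

lemma bs_adj_iff_nbrs:
  assumes "v \<in> bsV"
  shows "bs_adj v w \<longleftrightarrow> w \<in> set (bs_nbrs v)"
proof -
  note inverse_steps = mod_add_complement[of _ 17 1 16] mod_add_complement[of _ 17 16 1]
    mod_add_complement[of _ 17 4 13] mod_add_complement[of _ 17 13 4]
    mod_add_complement[of _ 17 2 15] mod_add_complement[of _ 17 15 2]
    mod_add_complement[of _ 17 8 9] mod_add_complement[of _ 17 9 8]
  show ?thesis
    using assms
    by (cases v; cases w; rename_tac i t j t'; case_tac t; case_tac t')
      (auto simp: bsV_def bs_adj_def bsE0_def bs_nbrs_def inverse_steps[simplified])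
qed

lemma bs_adj_in_bsV: "bs_adj v w \<Longrightarrow> v \<in> bsV \<and> w \<in> bsV"
  by (auto simp: bs_adj_def bsE0_def bsV_def)

lemma bs_walk_singleton: "bs_walk [v] x y \<longleftrightarrow> v = x \<and> v = y \<and> v \<in> bsV"
  by (auto simp: bs_walk_def)

lemma bs_walk_Cons_Cons:
  "bs_walk (v # w # p) x y \<longleftrightarrow> v = x \<and> v \<in> bsV \<and> bs_adj v w \<and> bs_walk (w # p) w y"
proof -
  have "(\<forall>k. Suc k < length (v # w # p) \<longrightarrow> bs_adj ((v # w # p) ! k) ((v # w # p) ! Suc k)) \<longleftrightarrow>
      bs_adj v w \<and> (\<forall>k. Suc k < length (w # p) \<longrightarrow> bs_adj ((w # p) ! k) ((w # p) ! Suc k))"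
    by (auto simp: less_Suc_eq_0_disj)
  then show ?thesis by (auto simp: bs_walk_def)
qed

lemma bs_walk_set: "bs_walk p x y \<Longrightarrow> x \<in> set p \<and> y \<in> set p \<and> set p \<subseteq> bsV"
  by (auto simp: bs_walk_def)

lemma bs_geodesic_set: "bs_geodesic p x u \<Longrightarrow> x \<in> set p \<and> u \<in> set p \<and> set p \<subseteq> bsV"
  unfolding bs_geodesic_def using bs_walk_set by blast

lemma first_meet_in_set: "set p \<inter> set q \<noteq> {} \<Longrightarrow> first_meet p q \<in> set p \<inter> set q"
proof -
  assume "set p \<inter> set q \<noteq> {}"
  then have "filter (\<lambda>v. v \<in> set q) p \<noteq> []" by (auto simp: filter_empty_conv)
  then show ?thesis unfolding first_meet_def using hd_in_set by fastforce
qed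

lemma first_meet_map:
  assumes "inj_on f (set p \<union> set q)" "set p \<inter> set q \<noteq> {}"
  shows "first_meet (map f p) (map f q) = f (first_meet p q)"
proof -
  have "filter ((\<lambda>v. v \<in> f ` set q) \<circ> f) p = filter (\<lambda>v. v \<in> set q) p"
    using assms(1) by (auto simp: inj_on_image_mem_iff intro!: filter_cong)
  then have "filter (\<lambda>v. v \<in> set (map f q)) (map f p) = map f (filter (\<lambda>v. v \<in> set q) p)"
    by (simp add: filter_map)
  moreover have "filter (\<lambda>v. v \<in> set q) p \<noteq> []" using assms(2) by (auto simp: filter_empty_conv)
  ultimately show ?thesis by (simp add: first_meet_def hd_map)
qed

lemma displaced4_map: "displaced4 (map f p) (map f r) = map f (displaced4 p r)"
  by (simp add: displaced4_def take_map)

lemma set_displaced4: "set (displaced4 p r) \<subseteq> set p \<union> set r"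
  by (auto simp: displaced4_def dest: in_set_takeD)

section \<open>Automorphisms\<close>

definition bs_automorphism :: "(bsvert \<Rightarrow> bsvert) \<Rightarrow> bool" where
  "bs_automorphism f \<longleftrightarrow> bij_betw f bsV bsV \<and> (\<forall>v \<in> bsV. \<forall>w \<in> bsV. bs_adj (f v) (f w) \<longleftrightarrow> bs_adj v w)"

lemma bs_automorphism_in_bsV: "bs_automorphism f \<Longrightarrow> v \<in> bsV \<Longrightarrow> f v \<in> bsV"
  unfolding bs_automorphism_def using bij_betw_apply[of f bsV bsV v] by simp

lemma bs_automorphism_inj_on: "bs_automorphism f \<Longrightarrow> inj_on f bsV"
  unfolding bs_automorphism_def using bij_betw_imp_inj_on[of f bsV bsV] by simp

lemma bs_adj_automorphism:
  "bs_automorphism f \<Longrightarrow> v \<in> bsV \<Longrightarrow> w \<in> bsV \<Longrightarrow> bs_adj (f v) (f w) \<longleftrightarrow> bs_adj v w"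
  by (simp add: bs_automorphism_def)

lemma bs_automorphism_inv:
  assumes f: "bs_automorphism f"
  shows "bs_automorphism (inv_into bsV f)"
proof -
  have bij: "bij_betw f bsV bsV" using f by (simp add: bs_automorphism_def)
  then have surj: "f ` bsV = bsV" by (rule bij_betw_imp_surj_on)
  let ?g = "inv_into bsV f"
  have g: "?g v \<in> bsV" "f (?g v) = v" if "v \<in> bsV" for v
    using that surj inv_into_into[of v f bsV] f_inv_into_f[of v f bsV] by simp_all
  have "bs_adj (?g v) (?g w) \<longleftrightarrow> bs_adj v w" if "v \<in> bsV" "w \<in> bsV" for v w
    using bs_adj_automorphism[OF f g(1)[OF that(1)] g(1)[OF that(2)]] g(2) that by simp
  then show ?thesis using bij_betw_inv_into[OF bij] by (simp add: bs_automorphism_def)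
qed

lemma bs_walk_map:
  assumes f: "bs_automorphism f" and "bs_walk p x y"
  shows "bs_walk (map f p) (f x) (f y)"
  using assms(2)
proof (induction p arbitrary: x rule: induct_list012)
  case (2 v)
  then have "v = x" "v = y" "v \<in> bsV" unfolding bs_walk_singleton by blast+
  then show ?case using bs_automorphism_in_bsV[OF f] by (simp add: bs_walk_singleton)
next
  case (3 v w p)
  then have walk: "v = x" "v \<in> bsV" "bs_adj v w" "bs_walk (w # p) w y"
    unfolding bs_walk_Cons_Cons by blast+
  then have "w \<in> bsV" by (auto dest: bs_walk_set)
  then have "bs_adj (f v) (f w)" using walk bs_adj_automorphism[OF f] by simp
  moreover have "bs_walk (map f (w # p)) (f w) (f y)" using "3.IH"(2) walk(4) .
  ultimately show ?case using walk bs_automorphism_in_bsV[OF f] by (simp add: bs_walk_Cons_Cons)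
qed (simp add: bs_walk_def)

lemma bs_dist_automorphism:
  assumes f: "bs_automorphism f" and "x \<in> bsV" "y \<in> bsV"
  shows "bs_dist (f x) (f y) = bs_dist x y"
proof -
  let ?g = "inv_into bsV f"
  have "?g (f v) = v" if "v \<in> bsV" for v
    using that bs_automorphism_inj_on[OF f] by simp
  then have pullback: "bs_walk (map ?g p) x y" if "bs_walk p (f x) (f y)" for p
    using bs_walk_map[OF bs_automorphism_inv[OF f] that] assms(2,3) by simp
  have "(\<exists>p. bs_walk p (f x) (f y) \<and> length p = n) \<longleftrightarrow> (\<exists>p. bs_walk p x y \<and> length p = n)" for n
  proof
    assume "\<exists>p. bs_walk p (f x) (f y) \<and> length p = n"
    then obtain p where "bs_walk p (f x) (f y)" "length p = n" by blast
    then show "\<exists>p. bs_walk p x y \<and> length p = n" using pullback by (intro exI[of _ "map ?g p"]) simp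
  next
    assume "\<exists>p. bs_walk p x y \<and> length p = n"
    then obtain p where "bs_walk p x y" "length p = n" by blast
    then show "\<exists>p. bs_walk p (f x) (f y) \<and> length p = n"
      using bs_walk_map[OF f] by (intro exI[of _ "map f p"]) simp
  qed
  then show ?thesis by (simp add: bs_dist_def)
qed

lemma bsD_automorphism:
  assumes "bs_automorphism f" "u \<in> bsV" "w \<in> bsV"
  shows "f w \<in> bsD j (f u) \<longleftrightarrow> w \<in> bsD j u"
  using assms by (simp add: bsD_def bs_dist_automorphism bs_automorphism_in_bsV)

lemma bs_geodesic_map:
  assumes f: "bs_automorphism f" and p: "bs_geodesic p x u"
  shows "bs_geodesic (map f p) (f x) (f u)"
proof -
  have "x \<in> bsV" "u \<in> bsV" using p bs_walk_set unfolding bs_geodesic_def by blast+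
  then show ?thesis using p bs_walk_map[OF f] by (simp add: bs_geodesic_def bs_dist_automorphism[OF f])
qed

definition bs_rotate :: "nat \<Rightarrow> bsvert \<Rightarrow> bsvert" where
  "bs_rotate k v = ((fst v + k) mod 17, snd v)"

lemma bs_rotate_in_bsV: "bs_rotate k v \<in> bsV"
  by (simp add: bs_rotate_def bsV_def)

lemma bs_rotate_rotate: "bs_rotate a (bs_rotate b v) = bs_rotate (a + b) v"
  by (simp add: bs_rotate_def mod_simps add.assoc add.commute[of a])

lemma bs_rotate_period: "v \<in> bsV \<Longrightarrow> m mod 17 = 0 \<Longrightarrow> bs_rotate m v = v"
  by (cases v) (simp add: bs_rotate_def bsV_def mod_add_right_eq[symmetric])

lemma bs_rotate_inverse:
  assumes "v \<in> bsV"
  shows "bs_rotate (17 - k mod 17) (bs_rotate k v) = v"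
proof -
  have "(17 - k mod 17 + k) mod 17 = 0" by presburger
  then show ?thesis using assms by (simp add: bs_rotate_rotate bs_rotate_period)
qed

lemma bs_adj_rotate_mono: "bs_adj v w \<Longrightarrow> bs_adj (bs_rotate k v) (bs_rotate k w)"
  by (cases v; cases w; rename_tac i t j t'; case_tac t; case_tac t')
    (auto simp: bs_adj_def bsE0_def bs_rotate_def mod_simps add_ac)

lemma bs_automorphism_rotate: "bs_automorphism (bs_rotate k)"
proof -
  let ?k' = "17 - k mod 17"
  have undo: "bs_rotate k (bs_rotate ?k' v) = v" if "v \<in> bsV" for v
  proof -
    have "(k + ?k') mod 17 = 0" by presburger
    then show ?thesis using that by (simp add: bs_rotate_rotate bs_rotate_period)
  qed
  have "bij_betw (bs_rotate k) bsV bsV"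
    by (rule bij_betw_byWitness[where f' = "bs_rotate ?k'"])
      (auto simp: bs_rotate_inverse undo bs_rotate_in_bsV)
  moreover have "bs_adj v w" if "v \<in> bsV" "w \<in> bsV" "bs_adj (bs_rotate k v) (bs_rotate k w)" for v w
    using bs_adj_rotate_mono[OF that(3), of ?k'] that(1,2) by (simp add: bs_rotate_inverse)
  ultimately show ?thesis
    unfolding bs_automorphism_def using bs_adj_rotate_mono by blast
qed

definition edge_geodesics_meet :: "bsvert \<Rightarrow> bool" where
  "edge_geodesics_meet u \<longleftrightarrow> (\<forall>i \<in> {4..6}. \<forall>x y p q.
     x \<in> bsD i u \<and> y \<in> bsD i u \<and> bs_adj x y \<and> bs_geodesic p x u \<and> bs_geodesic q y u
     \<longrightarrow> first_meet p q \<in> bsD (i - 4) u)"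

definition displaced_paths_disjoint :: "bsvert \<Rightarrow> bool" where
  "displaced_paths_disjoint u \<longleftrightarrow> (\<forall>x y p q z z' r s.
     x \<in> bsD 6 u \<and> y \<in> bsD 6 u \<and> bs_adj x y \<and> bs_geodesic p x u \<and> bs_geodesic q y u \<and>
     z \<in> bsD 4 u \<and> bs_adj (p ! 2) z \<and> bs_geodesic r z u \<and>
     z' \<in> bsD 4 u \<and> bs_adj (q ! 2) z' \<and> bs_geodesic s z' u
     \<longrightarrow> set (displaced4 p r) \<inter> set (displaced4 q s) = {u})"

lemma edge_geodesics_meet_automorphism:
  assumes f: "bs_automorphism f" and u: "u \<in> bsV" and meet: "edge_geodesics_meet (f u)"
  shows "edge_geodesics_meet u"
  unfolding edge_geodesics_meet_def
proof (intro ballI allI impI, elim conjE)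
  fix i x y p q
  assume i: "i \<in> {4..6}" and x: "x \<in> bsD i u" and y: "y \<in> bsD i u" and xy: "bs_adj x y"
    and p: "bs_geodesic p x u" and q: "bs_geodesic q y u"
  have V: "x \<in> bsV" "y \<in> bsV" "set p \<subseteq> bsV" "set q \<subseteq> bsV"
    using x y bs_geodesic_set[OF p] bs_geodesic_set[OF q] by (auto simp: bsD_def)
  have common: "u \<in> set p \<inter> set q" using bs_geodesic_set[OF p] bs_geodesic_set[OF q] by blast
  have "first_meet (map f p) (map f q) \<in> bsD (i - 4) (f u)"
    using x y xy V bs_geodesic_map[OF f p] bs_geodesic_map[OF f q]
    by (intro meet[unfolded edge_geodesics_meet_def, rule_format, of i "f x" "f y", OF i])
      (simp add: bsD_automorphism[OF f u] bs_adj_automorphism[OF f])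
  moreover have "first_meet (map f p) (map f q) = f (first_meet p q)"
  proof (rule first_meet_map)
    show "inj_on f (set p \<union> set q)"
      using V(3,4) by (intro inj_on_subset[OF bs_automorphism_inj_on[OF f]]) simp
  qed (use common in blast)
  moreover have "first_meet p q \<in> bsV"
    using first_meet_in_set[of p q] common V(3) by blast
  ultimately show "first_meet p q \<in> bsD (i - 4) u" by (simp add: bsD_automorphism[OF f u])
qed

lemma displaced_paths_disjoint_automorphism:
  assumes f: "bs_automorphism f" and u: "u \<in> bsV" and disj: "displaced_paths_disjoint (f u)"
  shows "displaced_paths_disjoint u"
  unfolding displaced_paths_disjoint_def
proof (intro allI impI, elim conjE)
  fix x y p q z z' r s
  assume x: "x \<in> bsD 6 u" and y: "y \<in> bsD 6 u" and xy: "bs_adj x y"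
    and p: "bs_geodesic p x u" and q: "bs_geodesic q y u"
    and z: "z \<in> bsD 4 u" and pz: "bs_adj (p ! 2) z" and r: "bs_geodesic r z u"
    and z': "z' \<in> bsD 4 u" and qz': "bs_adj (q ! 2) z'" and s: "bs_geodesic s z' u"
  have "length p = 7" "length q = 7"
    using p q x y by (simp_all add: bs_geodesic_def bsD_def)
  then have nth2: "map f p ! 2 = f (p ! 2)" "map f q ! 2 = f (q ! 2)" "p ! 2 \<in> set p" "q ! 2 \<in> set q"
    by simp_all
  note geo_sets = bs_geodesic_set[OF p] bs_geodesic_set[OF q] bs_geodesic_set[OF r] bs_geodesic_set[OF s]
  have V: "x \<in> bsV" "y \<in> bsV" "z \<in> bsV" "z' \<in> bsV" "p ! 2 \<in> bsV" "q ! 2 \<in> bsV"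
    using x y z z' nth2 geo_sets by (auto simp: bsD_def)
  let ?A = "set (displaced4 p r)" and ?B = "set (displaced4 q s)"
  have AB: "?A \<subseteq> bsV" "?B \<subseteq> bsV" "{u} \<subseteq> bsV"
    using set_displaced4[of p r] set_displaced4[of q s] geo_sets u by auto
  have "set (displaced4 (map f p) (map f r)) \<inter> set (displaced4 (map f q) (map f s)) = {f u}"
    using x y z z' xy pz qz' V nth2(1,2)
      bs_geodesic_map[OF f p] bs_geodesic_map[OF f q] bs_geodesic_map[OF f r] bs_geodesic_map[OF f s]
    by (intro disj[unfolded displaced_paths_disjoint_def, rule_format,
        where x = "f x" and y = "f y" and z = "f z" and z' = "f z'"])
      (simp add: bsD_automorphism[OF f u] bs_adj_automorphism[OF f])
  then have "f ` (?A \<inter> ?B) = f ` {u}"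
    using inj_on_image_Int[OF bs_automorphism_inj_on[OF f] AB(1,2)] by (simp add: displaced4_map)
  moreover have "?A \<inter> ?B \<subseteq> bsV" using AB(1) by blast
  ultimately show "?A \<inter> ?B = {u}"
    using inj_on_image_eq_iff[OF bs_automorphism_inj_on[OF f] _ AB(3)] by simp
qed

section \<open>Distance certificates\<close>

fun iterate_path :: "('a \<Rightarrow> 'a) \<Rightarrow> nat \<Rightarrow> 'a \<Rightarrow> 'a list" where
  "iterate_path f 0 v = [v]"
| "iterate_path f (Suc n) v = v # iterate_path f n (f v)"

lemma iterate_path_Cons: "\<exists>p. iterate_path f n v = v # p"
  by (cases n) simp_all

lemma length_iterate_path: "length (iterate_path f n v) = Suc n"
  by (induction n arbitrary: v) simp_all

definition bfs_certificate :: "bsvert \<Rightarrow> (bsvert \<Rightarrow> nat) \<Rightarrow> bool" where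
  "bfs_certificate u d \<longleftrightarrow> d u = 0 \<and>
     (\<forall>v \<in> set bs_vertices. \<forall>w \<in> set (bs_nbrs v). d v \<le> d w + 1) \<and>
     (\<forall>v \<in> set bs_vertices. v \<noteq> u \<longrightarrow> (\<exists>w \<in> set (bs_nbrs v). d w + 1 = d v))"

definition descent_step :: "(bsvert \<Rightarrow> nat) \<Rightarrow> bsvert \<Rightarrow> bsvert" where
  "descent_step d v = hd (filter (\<lambda>w. d w + 1 = d v) (bs_nbrs v))"

definition descent_path :: "(bsvert \<Rightarrow> nat) \<Rightarrow> bsvert \<Rightarrow> bsvert list" where
  "descent_path d v = iterate_path (descent_step d) (d v) v"

definition unique_descent :: "(bsvert \<Rightarrow> nat) \<Rightarrow> nat \<Rightarrow> bool" where
  "unique_descent d m \<longleftrightarrow> (\<forall>v \<in> set bs_vertices. 1 \<le> d v \<and> d v \<le> m \<longrightarrow>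
     (\<forall>w \<in> set (bs_nbrs v). d w + 1 = d v \<longrightarrow> w = descent_step d v))"

lemma bfs_certificate_adj:
  assumes "bfs_certificate u d" "bs_adj v w"
  shows "d v \<le> d w + 1"
proof -
  have "v \<in> bsV" using assms(2) bs_adj_in_bsV by blast
  then show ?thesis using assms by (auto simp: bfs_certificate_def set_bs_vertices bs_adj_iff_nbrs)
qed

lemma bfs_certificate_descent_step:
  assumes "bfs_certificate u d" "v \<in> bsV" "v \<noteq> u"
  shows "bs_adj v (descent_step d v) \<and> d (descent_step d v) + 1 = d v"
proof -
  have "filter (\<lambda>w. d w + 1 = d v) (bs_nbrs v) \<noteq> []"
    using assms by (auto simp: bfs_certificate_def set_bs_vertices filter_empty_conv)
  then have "descent_step d v \<in> set (filter (\<lambda>w. d w + 1 = d v) (bs_nbrs v))"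
    unfolding descent_step_def by (rule hd_in_set)
  then show ?thesis using assms(2) by (simp add: bs_adj_iff_nbrs)
qed

lemma bfs_certificate_walk_length:
  assumes d: "bfs_certificate u d" and "bs_walk p x y"
  shows "d x \<le> d y + (length p - 1)"
  using assms(2)
proof (induction p arbitrary: x rule: induct_list012)
  case (2 v)
  then show ?case by (auto simp: bs_walk_singleton)
next
  case (3 v w p)
  then have "v = x" "bs_adj v w" "bs_walk (w # p) w y"
    unfolding bs_walk_Cons_Cons by blast+
  then show ?case using "3.IH"(2) bfs_certificate_adj[OF d] by fastforce
qed (simp add: bs_walk_def)

lemma bfs_certificate_descent_walk:
  assumes d: "bfs_certificate u d" and u: "u \<in> bsV"
  shows "x \<in> bsV \<Longrightarrow> d x = n \<Longrightarrow> bs_walk (iterate_path (descent_step d) n x) x u"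
proof (induction n arbitrary: x)
  case 0
  have "x = u"
    using bfs_certificate_descent_step[OF d "0.prems"(1)] "0.prems"(2) by (cases "x = u") auto
  then show ?case using u by (simp add: bs_walk_singleton)
next
  case (Suc n)
  let ?w = "descent_step d x"
  have "x \<noteq> u" using Suc.prems d by (auto simp: bfs_certificate_def)
  then have step: "bs_adj x ?w" "d ?w = n"
    using bfs_certificate_descent_step[OF d Suc.prems(1)] Suc.prems(2) by auto
  then have walk: "bs_walk (iterate_path (descent_step d) n ?w) ?w u"
    using Suc.IH bs_adj_in_bsV by blast
  obtain p where "iterate_path (descent_step d) n ?w = ?w # p" using iterate_path_Cons by metis
  then show ?case using walk step Suc.prems(1) by (simp add: bs_walk_Cons_Cons)
qed

lemma bs_dist_eq_bfs_certificate:
  assumes d: "bfs_certificate u d" and u: "u \<in> bsV" and x: "x \<in> bsV"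
  shows "bs_dist x u = d x"
  unfolding bs_dist_def
proof (rule Least_equality)
  show "\<exists>p. bs_walk p x u \<and> length p = Suc (d x)"
    using bfs_certificate_descent_walk[OF d u x refl] length_iterate_path
    by (intro exI[of _ "iterate_path (descent_step d) (d x) x"]) simp
next
  fix n assume "\<exists>p. bs_walk p x u \<and> length p = Suc n"
  then obtain p where p: "bs_walk p x u" "length p = Suc n" by blast
  have "d x \<le> d u + (length p - 1)" by (rule bfs_certificate_walk_length[OF d p(1)])
  then show "d x \<le> n" using p(2) d by (simp add: bfs_certificate_def)
qed

lemma bfs_certificate_walk_eq_descent:
  assumes d: "bfs_certificate u d" and uniq: "unique_descent d m"
  shows "bs_walk p x u \<Longrightarrow> length p = Suc (d x) \<Longrightarrow> d x \<le> m \<Longrightarrow>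
    p = iterate_path (descent_step d) (d x) x"
proof (induction p arbitrary: x rule: induct_list012)
  case (2 v)
  then show ?case by (auto simp: bs_walk_singleton)
next
  case (3 v w p)
  then have walk: "v = x" "bs_adj x w" "bs_walk (w # p) w u"
    unfolding bs_walk_Cons_Cons by blast+
  have "d w \<le> d u + length p" using bfs_certificate_walk_length[OF d walk(3)] by simp
  then have dw: "d x = Suc (d w)"
    using bfs_certificate_adj[OF d walk(2)] "3.prems"(2) d by (simp add: bfs_certificate_def)
  have "x \<in> bsV" using walk(2) bs_adj_in_bsV by blast
  then have "w = descent_step d x"
    using uniq dw "3.prems"(3) walk(2)
    by (auto simp: unique_descent_def set_bs_vertices bs_adj_iff_nbrs)
  moreover have "w # p = iterate_path (descent_step d) (d w) w"
    using "3.IH"(2) walk(3) dw "3.prems"(2,3) by simp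
  ultimately show ?case using walk(1) dw by simp
qed (simp add: bs_walk_def)

lemma bs_geodesic_eq_descent_path:
  assumes "bfs_certificate u d" "unique_descent d m" "u \<in> bsV" "bs_geodesic p x u" "d x \<le> m"
  shows "p = descent_path d x"
proof -
  have "x \<in> bsV" using assms(4) bs_geodesic_set by blast
  then show ?thesis
    using assms bfs_certificate_walk_eq_descent[OF assms(1,2)]
    by (simp add: bs_geodesic_def descent_path_def bs_dist_eq_bfs_certificate)
qed

lemma bsD_bfs_certificate:
  assumes "bfs_certificate u d" "u \<in> bsV"
  shows "x \<in> bsD j u \<longleftrightarrow> x \<in> bsV \<and> d x = j"
  unfolding bsD_def using bs_dist_eq_bfs_certificate[OF assms, of x] by auto

text \<open>Guards are written as \<open>if \<dots> then \<dots> else True\<close> and descent paths are \<open>let\<close>-bound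
  so that evaluation by the simplifier only explores branches whose guard holds and computes
  each path once.\<close>

definition edge_geodesics_check :: "(bsvert \<Rightarrow> nat) \<Rightarrow> bool" where
  "edge_geodesics_check d \<longleftrightarrow> (\<forall>x \<in> set bs_vertices. if 4 \<le> d x \<and> d x \<le> 6 then
     (let px = descent_path d x in \<forall>y \<in> set (bs_nbrs x). if d y = d x then
        d (first_meet px (descent_path d y)) + 4 = d x else True) else True)"

definition displaced_paths_check :: "bsvert \<Rightarrow> (bsvert \<Rightarrow> nat) \<Rightarrow> bool" where
  "displaced_paths_check u d \<longleftrightarrow> (\<forall>x \<in> set bs_vertices. if d x = 6 then
     (let px = descent_path d x in \<forall>y \<in> set (bs_nbrs x). if d y = 6 then
     (let py = descent_path d y in \<forall>z \<in> set (bs_nbrs (px ! 2)). if d z = 4 then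
     (let A = set (displaced4 px (descent_path d z)) in \<forall>z' \<in> set (bs_nbrs (py ! 2)). if d z' = 4 then
        A \<inter> set (displaced4 py (descent_path d z')) = {u} else True) else True) else True) else True)"

lemma edge_geodesics_meet_if_checked:
  assumes d: "bfs_certificate u d" and uniq: "unique_descent d 6" and u: "u \<in> bsV"
    and check: "edge_geodesics_check d"
  shows "edge_geodesics_meet u"
  unfolding edge_geodesics_meet_def
proof (intro ballI allI impI, elim conjE)
  fix i x y p q
  assume i: "i \<in> {4..6}" and x: "x \<in> bsD i u" and y: "y \<in> bsD i u" and xy: "bs_adj x y"
    and p: "bs_geodesic p x u" and q: "bs_geodesic q y u"
  have dx: "x \<in> bsV" "d x = i" and dy: "y \<in> bsV" "d y = i"
    using x y by (simp_all add: bsD_bfs_certificate[OF d u])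
  have pq: "p = descent_path d x" "q = descent_path d y"
    using bs_geodesic_eq_descent_path[OF d uniq u] p q dx dy i by auto
  have "y \<in> set (bs_nbrs x)" using xy dx(1) by (simp add: bs_adj_iff_nbrs)
  moreover have "\<forall>x \<in> bsV. 4 \<le> d x \<and> d x \<le> 6 \<longrightarrow> (\<forall>y \<in> set (bs_nbrs x). d y = d x \<longrightarrow>
      d (first_meet (descent_path d x) (descent_path d y)) + 4 = d x)"
    using check unfolding edge_geodesics_check_def set_bs_vertices Let_def if_bool_eq_conj by simp
  ultimately have "d (first_meet p q) + 4 = i" using pq dx dy i by auto
  moreover have "first_meet p q \<in> bsV"
    using first_meet_in_set[of p q] bs_geodesic_set[OF p] bs_geodesic_set[OF q] by blast
  ultimately show "first_meet p q \<in> bsD (i - 4) u" by (simp add: bsD_bfs_certificate[OF d u])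
qed

lemma displaced_paths_disjoint_if_checked:
  assumes d: "bfs_certificate u d" and uniq: "unique_descent d 6" and u: "u \<in> bsV"
    and check: "displaced_paths_check u d"
  shows "displaced_paths_disjoint u"
  unfolding displaced_paths_disjoint_def
proof (intro allI impI, elim conjE)
  fix x y p q z z' r s
  assume x: "x \<in> bsD 6 u" and y: "y \<in> bsD 6 u" and xy: "bs_adj x y"
    and p: "bs_geodesic p x u" and q: "bs_geodesic q y u"
    and z: "z \<in> bsD 4 u" and pz: "bs_adj (p ! 2) z" and r: "bs_geodesic r z u"
    and z': "z' \<in> bsD 4 u" and qz': "bs_adj (q ! 2) z'" and s: "bs_geodesic s z' u"
  have V: "x \<in> bsV" "y \<in> bsV" "p ! 2 \<in> bsV" "q ! 2 \<in> bsV"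
    using x y pz qz' bs_adj_in_bsV by (auto simp: bsD_def)
  have dist: "d x = 6" "d y = 6" "d z = 4" "d z' = 4"
    using x y z z' by (simp_all add: bsD_bfs_certificate[OF d u])
  have paths: "p = descent_path d x" "q = descent_path d y" "r = descent_path d z" "s = descent_path d z'"
    using bs_geodesic_eq_descent_path[OF d uniq u] p q r s dist by auto
  have nbrs: "y \<in> set (bs_nbrs x)" "z \<in> set (bs_nbrs (p ! 2))" "z' \<in> set (bs_nbrs (q ! 2))"
    using xy pz qz' V by (simp_all add: bs_adj_iff_nbrs)
  have "\<forall>x \<in> bsV. d x = 6 \<longrightarrow> (\<forall>y \<in> set (bs_nbrs x). d y = 6 \<longrightarrow>
      (\<forall>z \<in> set (bs_nbrs (descent_path d x ! 2)). d z = 4 \<longrightarrow>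
      (\<forall>z' \<in> set (bs_nbrs (descent_path d y ! 2)). d z' = 4 \<longrightarrow>
        set (displaced4 (descent_path d x) (descent_path d z)) \<inter>
        set (displaced4 (descent_path d y) (descent_path d z')) = {u})))"
    using check unfolding displaced_paths_check_def set_bs_vertices Let_def if_bool_eq_conj by simp
  then show "set (displaced4 p r) \<inter> set (displaced4 q s) = {u}"
    using V(1) dist nbrs unfolding paths by blast
qed

section \<open>Verification at the base vertices\<close>

text \<open>\<open>dist_row s t ! i\<close> is the distance from \<open>(0, s)\<close> to \<open>(i, t)\<close>, as found by a breadth-first
  search; it enters the proof only through the certificate check.\<close>

fun dist_row :: "letter \<Rightarrow> letter \<Rightarrow> nat list" where
  "dist_row La La = [0,1,2,3,4,5,6,7,6,6,7,6,5,4,3,2,1]"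
| "dist_row La Lb = [2,3,4,4,3,4,5,5,4,4,5,5,4,3,4,4,3]"
| "dist_row La Lc = [3,4,4,5,5,6,6,7,6,6,7,6,6,5,5,4,4]"
| "dist_row La Ld = [3,4,5,6,6,7,6,5,4,4,5,6,7,6,6,5,4]"
| "dist_row La Le = [1,2,3,4,4,5,6,6,5,5,6,6,5,4,4,3,2]"
| "dist_row La Lf = [2,3,4,5,5,6,7,6,5,5,6,7,6,5,5,4,3]"
| "dist_row Lb La = [2,3,4,4,3,4,5,5,4,4,5,5,4,3,4,4,3]"
| "dist_row Lb Lb = [0,4,6,5,1,3,7,6,2,2,6,7,3,1,5,6,4]"
| "dist_row Lb Lc = [3,6,4,7,4,6,5,6,5,5,6,5,6,4,7,4,6]"
| "dist_row Lb Ld = [3,5,6,6,4,5,7,6,4,4,6,7,5,4,6,6,5]"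
| "dist_row Lb Le = [1,4,5,5,2,4,6,6,3,3,6,6,4,2,5,5,4]"
| "dist_row Lb Lf = [2,5,5,6,3,5,6,7,4,4,7,6,5,3,6,5,5]"
| "dist_row Lc La = [3,4,4,5,5,6,6,7,6,6,7,6,6,5,5,4,4]"
| "dist_row Lc Lb = [3,6,4,7,4,6,5,6,5,5,6,5,6,4,7,4,6]"
| "dist_row Lc Lc = [0,6,1,7,2,6,3,5,4,4,5,3,6,2,7,1,6]"
| "dist_row Lc Ld = [2,4,3,5,4,5,4,4,3,3,4,4,5,4,5,3,4]"
| "dist_row Lc Le = [2,5,3,6,4,7,5,6,5,5,6,5,7,4,6,3,5]"
| "dist_row Lc Lf = [1,5,2,6,3,6,4,5,4,4,5,4,6,3,6,2,5]"
| "dist_row Ld La = [3,4,5,6,6,7,6,5,4,4,5,6,7,6,6,5,4]"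
| "dist_row Ld Lb = [3,5,6,6,4,5,7,6,4,4,6,7,5,4,6,6,5]"
| "dist_row Ld Lc = [2,4,3,5,4,5,4,4,3,3,4,4,5,4,5,3,4]"
| "dist_row Ld Ld = [0,2,4,6,6,7,5,3,1,1,3,5,7,6,6,4,2]"
| "dist_row Ld Le = [2,4,5,7,5,6,6,5,3,3,5,6,6,5,7,5,4]"
| "dist_row Ld Lf = [1,3,4,6,5,6,5,4,2,2,4,5,6,5,6,4,3]"
| "dist_row Le La = [1,2,3,4,4,5,6,6,5,5,6,6,5,4,4,3,2]"
| "dist_row Le Lb = [1,4,5,5,2,4,6,6,3,3,6,6,4,2,5,5,4]"
| "dist_row Le Lc = [2,5,3,6,4,7,5,6,5,5,6,5,7,4,6,3,5]"
| "dist_row Le Ld = [2,4,5,7,5,6,6,5,3,3,5,6,6,5,7,5,4]"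
| "dist_row Le Le = [0,3,4,5,3,5,7,7,4,4,7,7,5,3,5,4,3]"
| "dist_row Le Lf = [1,4,4,6,4,6,6,6,4,4,6,6,6,4,6,4,4]"
| "dist_row Lf La = [2,3,4,5,5,6,7,6,5,5,6,7,6,5,5,4,3]"
| "dist_row Lf Lb = [2,5,5,6,3,5,6,7,4,4,7,6,5,3,6,5,5]"
| "dist_row Lf Lc = [1,5,2,6,3,6,4,5,4,4,5,4,6,3,6,2,5]"
| "dist_row Lf Ld = [1,3,4,6,5,6,5,4,2,2,4,5,6,5,6,4,3]"
| "dist_row Lf Le = [1,4,4,6,4,6,6,6,4,4,6,6,6,4,6,4,4]"
| "dist_row Lf Lf = [0,4,3,7,4,7,5,5,3,3,5,5,7,4,7,3,4]"

definition base_dist :: "letter \<Rightarrow> bsvert \<Rightarrow> nat" where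
  "base_dist s v = dist_row s (snd v) ! fst v"

definition base_checks :: "letter \<Rightarrow> bool" where
  "base_checks s \<longleftrightarrow> bfs_certificate (0, s) (base_dist s) \<and> unique_descent (base_dist s) 6 \<and>
     edge_geodesics_check (base_dist s) \<and> displaced_paths_check (0, s) (base_dist s)"

lemma base_checks_La: "base_checks La"
  by code_simp

lemma base_checks_Lb: "base_checks Lb"
  by code_simp

lemma base_checks_Lc: "base_checks Lc"
  by code_simp

lemma base_checks_Ld: "base_checks Ld"
  by code_simp

lemma base_checks_Le: "base_checks Le"
  by code_simp

lemma base_checks_Lf: "base_checks Lf"
  by code_simp

lemma base_checks: "base_checks s"
  using base_checks_La base_checks_Lb base_checks_Lc base_checks_Ld base_checks_Le base_checks_Lf
  by (cases s) simp_all

lemma edge_geodesics_meet_and_displaced_paths_disjoint: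
  assumes u: "u \<in> bsV"
  shows "edge_geodesics_meet u \<and> displaced_paths_disjoint u"
proof -
  let ?f = "bs_rotate (17 - fst u)"
  have base: "?f u = (0, snd u)" using u by (cases u) (simp add: bs_rotate_def bsV_def)
  have "(0, snd u) \<in> bsV" by (simp add: bsV_def)
  then have "edge_geodesics_meet (?f u) \<and> displaced_paths_disjoint (?f u)"
    using base_checks[of "snd u"] edge_geodesics_meet_if_checked displaced_paths_disjoint_if_checked
    unfolding base base_checks_def by blast
  then show ?thesis
    using edge_geodesics_meet_automorphism[OF bs_automorphism_rotate u]
      displaced_paths_disjoint_automorphism[OF bs_automorphism_rotate u]
    by blast
qed

theorem corollary2p6:
  assumes "u \<in> bsV"
  shows
   "(\<forall>i \<in> {4..6}. \<forall>x y p q.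
        x \<in> bsD i u \<and> y \<in> bsD i u \<and> bs_adj x y \<and>
        bs_geodesic p x u \<and> bs_geodesic q y u
        \<longrightarrow> first_meet p q \<in> bsD (i - 4) u)
  \<and> (\<forall>x y p q z z' r s.
        x \<in> bsD 6 u \<and> y \<in> bsD 6 u \<and> bs_adj x y \<and>
        bs_geodesic p x u \<and> bs_geodesic q y u \<and>
        z \<in> bsD 4 u \<and> bs_adj (p ! 2) z \<and> bs_geodesic r z u \<and>
        z' \<in> bsD 4 u \<and> bs_adj (q ! 2) z' \<and> bs_geodesic s z' u
        \<longrightarrow> set (displaced4 p r) \<inter> set (displaced4 q s) = {u})"
  using edge_geodesics_meet_and_displaced_paths_disjoint[OF assms]
  unfolding edge_geodesics_meet_def displaced_paths_disjoint_def .

end
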